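(* If $\Gamma\in\mathcal S$ has vertices $v_1,\dots,v_n$, then $\left|\sum_{i=1}^n d(v_i)\right|\le 3n+1$.
   Context: A plumbing tree is a finite tree $\Gamma$ each of whose vertices $v$ carries an integer decoration $d(v)$. $\Gamma$ is minimal if no vertex has decoration $-1$. For $n\ge 1$ let $(\mathbb Z^n,Q_n)$ be the lattice with basis $E_1,\dots,E_n$ and $Q_n(E_i,E_j)=-\delta_{ij}$, and let $K=\sum_{i=1}^n E_i$. A plumbing tree $\Gamma$ on $n$ vertices is a symplectic plumbing tree if there is a map $\varphi$ (an embedding) from its vertex set to $\mathbb Z^n$ such that: for distinct vertices $v_1,v_2$, $Q_n(\varphi(v_1),\varphi(v_2))$ is $1$ if they are adjacent and $0$ otherwise; $Q_n(\varphi(v),\varphi(v))=d(v)$ for every $v$; and $Q_n(\varphi(v),K)+Q_n(\varphi(v),\varphi(v))=-2$ for every $v$. $\mathcal S$ is the set of minimal, connected symplectic plumbing trees. *)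

theory Defs
  imports Main
begin

definition simple_graph :: "'a set \<Rightarrow> ('a \<Rightarrow> 'a \<Rightarrow> bool) \<Rightarrow> bool" where
  "simple_graph V E \<longleftrightarrow> finite V \<and> (\<forall>u v. E u v \<longrightarrow> u \<in> V \<and> v \<in> V)
     \<and> (\<forall>u v. E u v \<longrightarrow> E v u) \<and> (\<forall>u. \<not> E u u)"

definition graph_edges :: "'a set \<Rightarrow> ('a \<Rightarrow> 'a \<Rightarrow> bool) \<Rightarrow> 'a set set" where
  "graph_edges V E = {{u, v} | u v. u \<in> V \<and> v \<in> V \<and> E u v}"

definition graph_connected :: "'a set \<Rightarrow> ('a \<Rightarrow> 'a \<Rightarrow> bool) \<Rightarrow> bool" where
  "graph_connected V E \<longleftrightarrow> (\<forall>u\<in>V. \<forall>v\<in>V. (\<lambda>x y. x \<in> V \<and> y \<in> V \<and> E x y)\<^sup>*\<^sup>* u v)"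

definition is_tree :: "'a set \<Rightarrow> ('a \<Rightarrow> 'a \<Rightarrow> bool) \<Rightarrow> bool" where
  "is_tree V E \<longleftrightarrow> simple_graph V E \<and> V \<noteq> {} \<and> graph_connected V E
     \<and> card (graph_edges V E) = card V - 1"

(* The lattice (Z^n, Q_n): vectors are functions nat => int supported in {0..<n} *)
definition lattice_vec :: "nat \<Rightarrow> (nat \<Rightarrow> int) \<Rightarrow> bool" where
  "lattice_vec n x \<longleftrightarrow> (\<forall>i\<ge>n. x i = 0)"

definition Qn :: "nat \<Rightarrow> (nat \<Rightarrow> int) \<Rightarrow> (nat \<Rightarrow> int) \<Rightarrow> int" where
  "Qn n x y = - (\<Sum>i<n. x i * y i)"

definition canK :: "nat \<Rightarrow> nat \<Rightarrow> int" where
  "canK n = (\<lambda>i. if i < n then 1 else 0)"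

definition symplectic_embedding ::
  "'a set \<Rightarrow> ('a \<Rightarrow> 'a \<Rightarrow> bool) \<Rightarrow> ('a \<Rightarrow> int) \<Rightarrow> ('a \<Rightarrow> nat \<Rightarrow> int) \<Rightarrow> bool" where
  "symplectic_embedding V E d \<phi> \<longleftrightarrow>
     (let n = card V in
       (\<forall>v\<in>V. lattice_vec n (\<phi> v))
     \<and> (\<forall>v1\<in>V. \<forall>v2\<in>V. v1 \<noteq> v2 \<longrightarrow> Qn n (\<phi> v1) (\<phi> v2) = (if E v1 v2 then 1 else 0))
     \<and> (\<forall>v\<in>V. Qn n (\<phi> v) (\<phi> v) = d v)
     \<and> (\<forall>v\<in>V. Qn n (\<phi> v) (canK n) + Qn n (\<phi> v) (\<phi> v) = -2))"

definition symplectic_plumbing_tree :: "'a set \<Rightarrow> ('a \<Rightarrow> 'a \<Rightarrow> bool) \<Rightarrow> ('a \<Rightarrow> int) \<Rightarrow> bool" where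
  "symplectic_plumbing_tree V E d \<longleftrightarrow> is_tree V E \<and> (\<exists>\<phi>. symplectic_embedding V E d \<phi>)"

definition minimal_plumbing :: "'a set \<Rightarrow> ('a \<Rightarrow> int) \<Rightarrow> bool" where
  "minimal_plumbing V d \<longleftrightarrow> (\<forall>v\<in>V. d v \<noteq> -1)"

definition in_S :: "'a set \<Rightarrow> ('a \<Rightarrow> 'a \<Rightarrow> bool) \<Rightarrow> ('a \<Rightarrow> int) \<Rightarrow> bool" where
  "in_S V E d \<longleftrightarrow> minimal_plumbing V d \<and> graph_connected V E \<and> symplectic_plumbing_tree V E d"

end

theory Submission
  imports Defs "HOL-Analysis.Convex"
begin

text \<open>Let \<open>s\<close> be the sum of the images of all vertices under the embedding \<open>\<phi>\<close> and
  \<open>n = |V|\<close>. The adjunction condition gives \<open>\<Sum>\<^sub>i s\<^sub>i = 2n + \<Sum>\<^sub>v d(v)\<close>, and expanding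
  \<open>Q\<^sub>n(s, s)\<close> shows \<open>\<Sum>\<^sub>i s\<^sub>i\<^sup>2 = -\<Sum>\<^sub>v d(v) - 2(n - 1)\<close>, each of the \<open>n - 1\<close> edges of the tree
  being counted twice. The Cauchy-Schwarz inequality \<open>(\<Sum>\<^sub>i s\<^sub>i)\<^sup>2 \<le> n \<Sum>\<^sub>i s\<^sub>i\<^sup>2\<close> then bounds
  \<open>-\<Sum>\<^sub>v d(v)\<close> by \<open>3n + 1\<close>, while \<open>d(v) = Q\<^sub>n(\<phi> v, \<phi> v) \<le> 0\<close> for every vertex.\<close>

lemma int_sum_squared_le_sum_of_squares:
  fixes f :: "'i \<Rightarrow> int"
  shows "(\<Sum>i\<in>I. f i)\<^sup>2 \<le> int (card I) * (\<Sum>i\<in>I. (f i)\<^sup>2)"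
proof -
  have "real_of_int ((\<Sum>i\<in>I. f i)\<^sup>2) \<le> real_of_int (int (card I) * (\<Sum>i\<in>I. (f i)\<^sup>2))"
    using sum_squared_le_sum_of_squares[of "\<lambda>i. real_of_int (f i)" I] by (simp add: mult.commute)
  then show ?thesis by linarith
qed

lemma card_adjacent_pairs:
  assumes "simple_graph V E"
  shows "card {(u, v) \<in> V \<times> V. E u v} = 2 * card (graph_edges V E)"
proof -
  let ?P = "{(u, v) \<in> V \<times> V. E u v}"
  have "finite ?P"
    using assms by (auto simp: simple_graph_def intro: finite_subset[of _ "V \<times> V"])
  have edges: "graph_edges V E = (\<lambda>(u, v). {u, v}) ` ?P"
    by (auto simp: graph_edges_def)
  have fibre: "card {p \<in> ?P. (\<lambda>(u, v). {u, v}) p = e} = 2" if edge: "e \<in> graph_edges V E" for e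
  proof -
    obtain u v where "u \<in> V" "v \<in> V" "E u v" and e: "e = {u, v}"
      using edge by (auto simp: graph_edges_def)
    with assms have "u \<noteq> v" "E v u" by (auto simp: simple_graph_def)
    then have "{p \<in> ?P. (\<lambda>(u, v). {u, v}) p = e} = {(u, v), (v, u)}"
      using \<open>u \<in> V\<close> \<open>v \<in> V\<close> \<open>E u v\<close> e by (auto simp: doubleton_eq_iff)
    with \<open>u \<noteq> v\<close> show ?thesis by simp
  qed
  have "card ?P = (\<Sum>e\<in>graph_edges V E. card {p \<in> ?P. (\<lambda>(u, v). {u, v}) p = e})"
    unfolding edges using card_eq_sum sum.image_gen[OF \<open>finite ?P\<close>, of "\<lambda>_. 1::nat"] by simp
  also have "\<dots> = 2 * card (graph_edges V E)"
    using fibre by simp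
  finally show ?thesis .
qed

lemma int_quadratic_bound:
  fixes n A :: int
  assumes "n \<ge> 0" "(2 * n - A)\<^sup>2 \<le> n * (A - 2 * n + 2)"
  shows "A \<le> 3 * n + 1"
proof (rule ccontr)
  define C where "C = A - 2 * n"
  assume "\<not> A \<le> 3 * n + 1"
  then have "C \<ge> n + 2" by (simp add: C_def)
  have "C * C \<le> n * C + 2 * n"
    using assms(2) by (simp add: C_def power2_eq_square algebra_simps)
  moreover have "(n + 2) * C \<le> C * C"
    using \<open>C \<ge> n + 2\<close> assms(1) by (intro mult_right_mono) auto
  ultimately show False
    using \<open>C \<ge> n + 2\<close> assms(1) by (simp add: algebra_simps)
qed

lemma symplectic_embedding_inner:
  assumes "symplectic_embedding V E d \<phi>" "v \<in> V" "w \<in> V"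
  shows "(\<Sum>i<card V. \<phi> v i * \<phi> w i) = (if v = w then - d v else if E v w then -1 else 0)"
proof -
  have "Qn (card V) (\<phi> v) (\<phi> w) = (if v = w then d v else if E v w then 1 else 0)"
    using assms by (auto simp: symplectic_embedding_def Let_def)
  then show ?thesis
    by (auto simp: Qn_def split: if_splits)
qed

lemma symplectic_embedding_decoration_nonpos:
  assumes "symplectic_embedding V E d \<phi>" "v \<in> V"
  shows "d v \<le> 0"
proof -
  have "0 \<le> (\<Sum>i<card V. \<phi> v i * \<phi> v i)"
    by (simp add: sum_nonneg)
  then show ?thesis
    using symplectic_embedding_inner[OF assms assms(2)] by simp
qed

lemma symplectic_embedding_coordinate_sum:
  assumes "symplectic_embedding V E d \<phi>" "v \<in> V"
  shows "(\<Sum>i<card V. \<phi> v i) = d v + 2"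
proof -
  have "Qn (card V) (\<phi> v) (canK (card V)) + Qn (card V) (\<phi> v) (\<phi> v) = -2"
    and "Qn (card V) (\<phi> v) (\<phi> v) = d v"
    using assms by (auto simp: symplectic_embedding_def Let_def)
  then show ?thesis
    by (simp add: Qn_def canK_def)
qed

lemma symplectic_embedding_total_coordinate_sum:
  assumes "symplectic_embedding V E d \<phi>" "finite V"
  shows "(\<Sum>i<card V. \<Sum>v\<in>V. \<phi> v i) = 2 * int (card V) + (\<Sum>v\<in>V. d v)"
proof -
  have "(\<Sum>i<card V. \<Sum>v\<in>V. \<phi> v i) = (\<Sum>v\<in>V. d v + 2)"
    using symplectic_embedding_coordinate_sum[OF assms(1)] by (simp add: sum.swap[of _ V])
  then show ?thesis
    by (simp add: sum.distrib)
qed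

lemma symplectic_embedding_total_square_norm:
  assumes "symplectic_embedding V E d \<phi>" "simple_graph V E"
  shows "(\<Sum>i<card V. (\<Sum>v\<in>V. \<phi> v i)\<^sup>2)
    = - (\<Sum>v\<in>V. d v) - int (card {(u, v) \<in> V \<times> V. E u v})"
proof -
  have "finite V" and irrefl: "\<And>u. \<not> E u u"
    using assms(2) by (auto simp: simple_graph_def)
  have "(\<Sum>i<card V. (\<Sum>v\<in>V. \<phi> v i)\<^sup>2) = (\<Sum>v\<in>V. \<Sum>w\<in>V. \<Sum>i<card V. \<phi> v i * \<phi> w i)"
    by (simp add: power2_eq_square sum_product sum.swap[of _ "{..<card V}"])
  also have "\<dots> = (\<Sum>v\<in>V. \<Sum>w\<in>V. (if v = w then - d v else 0) - (if E v w then 1 else 0))"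
    using irrefl by (intro sum.cong refl) (auto simp: symplectic_embedding_inner[OF assms(1)])
  also have "\<dots> = - (\<Sum>v\<in>V. d v) - (\<Sum>(u, v)\<in>V \<times> V. if E u v then 1 else 0)"
    using \<open>finite V\<close> by (simp add: sum_subtractf sum_negf sum.cartesian_product)
  also have "(\<Sum>(u, v)\<in>V \<times> V. if E u v then 1 else 0) = int (card {(u, v) \<in> V \<times> V. E u v})"
    using \<open>finite V\<close> by (simp add: sum.If_cases case_prod_beta Int_def) (rule arg_cong[where f = card], auto)
  finally show ?thesis .
qed

theorem corollary3p3:
  fixes V :: "'a set" and E :: "'a \<Rightarrow> 'a \<Rightarrow> bool" and d :: "'a \<Rightarrow> int"
  assumes "in_S V E d"
  shows "\<bar>\<Sum>v\<in>V. d v\<bar> \<le> 3 * int (card V) + 1"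
proof -
  obtain \<phi> where emb: "symplectic_embedding V E d \<phi>" and tree: "is_tree V E"
    using assms by (auto simp: in_S_def symplectic_plumbing_tree_def)
  then have graph: "simple_graph V E" and "V \<noteq> {}" "finite V"
    by (auto simp: is_tree_def simple_graph_def)
  define n where "n = int (card V)"
  define A where "A = - (\<Sum>v\<in>V. d v)"
  have "int (card {(u, v) \<in> V \<times> V. E u v}) = 2 * n - 2"
    using card_adjacent_pairs[OF graph] tree \<open>V \<noteq> {}\<close> \<open>finite V\<close>
    by (simp add: is_tree_def n_def Suc_leI card_gt_0_iff of_nat_diff)
  then have "(2 * n - A)\<^sup>2 \<le> n * (A - 2 * n + 2)"
    using int_sum_squared_le_sum_of_squares[of "\<lambda>i. \<Sum>v\<in>V. \<phi> v i" "{..<card V}"]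
    by (simp add: symplectic_embedding_total_coordinate_sum[OF emb \<open>finite V\<close>]
        symplectic_embedding_total_square_norm[OF emb graph] n_def A_def) (simp add: algebra_simps)
  then have "A \<le> 3 * n + 1"
    by (rule int_quadratic_bound[rotated]) (simp add: n_def)
  moreover have "A \<ge> 0"
    using symplectic_embedding_decoration_nonpos[OF emb] by (simp add: A_def sum_nonpos)
  ultimately show ?thesis
    by (simp add: A_def n_def)
qed

end
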